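(* Let $\bm X$ be an integrable random vector in $\mathbb{R}^d$, and let $\bm Y_1,\ldots,\bm Y_k\in\mathbb{R}^m$ be observations that are conditionally i.i.d. given $\bm X$ with a common conditional density $f_{\bm Y|\bm X}$, i.e. the joint density factorizes as $f_{\bm X}(\bm x)\prod_{i=1}^k f_{\bm Y|\bm X}(\bm y_i|\bm x)$. Let $\bm Y$ denote a generic observation with $(\bm X,\bm Y)$ having density $f_{\bm X}(\bm x)f_{\bm Y|\bm X}(\bm y|\bm x)$, let $g(\bm y)=\mathbb{E}[\bm X\mid\bm Y=\bm y]$, and set $W=\|\bm X-g(\bm Y)\|_2^2$. Define \[ D_2(k)=\mathbb{E}\!\left[\min_{1\le i\le k}\|\bm X-g(\bm Y_i)\|_2^2\right]. \] Assume there are constants $C>0$, $\alpha>0$, $a_0>0$ such that $\mathbb{P}(W\le a)\le Ca^\alpha$ for all $a\in[0,a_0]$. Then for every $k$ such that \[ a^\star\triangleq\left(\frac{1}{C(1+\alpha k)}\right)^{1/\alpha}\le a_0, \] we have \[ D_2(k)\ge e^{-1/\alpha}\left(\frac{1}{C(1+\alpha k)}\right)^{1/\alpha}. \] In particular, $D_2(k)=\Omega(k^{-1/\alpha})$ as $k\to\infty$.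
   Context: $g$ is the single-agent MMSE estimator (conditional expectation), applied by each of the $k$ agents to its own observation. $f=\Omega(h)$ means $f(k)\ge c\,h(k)$ for some constant $c>0$ and all sufficiently large $k$. *)

theory Defs
  imports "HOL-Probability.Probability"
begin

definition pair_law :: "('d::euclidean_space \<Rightarrow> real) \<Rightarrow> ('m::euclidean_space \<Rightarrow> 'd \<Rightarrow> real) \<Rightarrow> ('d \<times> 'm) measure" where
  "pair_law fX fYX = density lborel (\<lambda>(x, y). ennreal (fX x * fYX y x))"

definition is_cond_exp_version :: "('d::euclidean_space \<times> 'm::euclidean_space) measure \<Rightarrow> ('m \<Rightarrow> 'd) \<Rightarrow> bool" where
  "is_cond_exp_version P g \<longleftrightarrow>
     g \<in> borel_measurable borel \<and>
     integrable P (\<lambda>(x, y). g y) \<and>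
     (\<forall>B \<in> sets (borel :: 'm measure).
        (\<integral>(x, y). indicator B y *\<^sub>R x \<partial>P) = (\<integral>(x, y). indicator B y *\<^sub>R g y \<partial>P))"

end

theory Submission
  imports Defs "HOL-Real_Asymp.Real_Asymp"
begin

text \<open>
  Write \<open>W\<^sub>i = \<parallel>X - g(Y\<^sub>i)\<parallel>\<^sup>2\<close>. Given \<open>X = x\<close>, the events \<open>W\<^sub>i > a\<close> are independent with
  a common probability \<open>q(x)\<close>, so \<open>P(min\<^sub>i W\<^sub>i > a) = E[q(X)^k] \<ge> E[q(X)]^k \<ge> (1 - C a^\<alpha>)^k\<close>
  by Jensen's inequality for \<open>t^k\<close> and the small-ball hypothesis; Markov's inequality then gives
  \<open>D\<^sub>2(k) \<ge> a (1 - C a^\<alpha>)^k\<close>. At \<open>a = a\<^sup>*\<close> one has \<open>C a^\<alpha> = 1/(1 + \<alpha> k)\<close>, and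
  \<open>(1 - 1/(1 + \<alpha> k))^k \<ge> exp(-1/\<alpha>)\<close> because \<open>(1 + 1/(\<alpha> k))^k \<le> exp(1/\<alpha>)\<close>.
\<close>

lemma power_tangent_le:
  fixes r s :: real
  assumes "0 \<le> r" "0 < s"
  shows "s ^ k + real k * s ^ (k - 1) * (r - s) \<le> r ^ k"
proof (cases k)
  case 0
  then show ?thesis by simp
next
  case (Suc n)
  have "1 + real k * (r / s - 1) \<le> (1 + (r / s - 1)) ^ k"
    by (rule Bernoulli_inequality) (use assms in simp)
  then have "s ^ k * (1 + real k * (r / s - 1)) \<le> s ^ k * (r / s) ^ k"
    using assms by (intro mult_left_mono) auto
  also have "\<dots> = r ^ k"
    using assms by (simp add: power_divide)
  also have "s ^ k * (1 + real k * (r / s - 1)) = s ^ k + real k * s ^ n * (s * (r / s - 1))"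
    by (simp add: Suc algebra_simps)
  also have "s * (r / s - 1) = r - s"
    using assms by (simp add: right_diff_distrib)
  finally show ?thesis
    by (simp add: Suc)
qed

lemma ennreal_power_tangent_le:
  fixes t :: ennreal and s :: real
  assumes "0 < s"
  shows "ennreal (s ^ k) + ennreal (real k * s ^ (k - 1)) * t
    \<le> t ^ k + ennreal (real k * s ^ k)"
proof (cases t)
  case (real r)
  have "s ^ k + real k * s ^ (k - 1) * r \<le> r ^ k + real k * s ^ (k - 1) * s"
    using power_tangent_le [OF \<open>0 \<le> r\<close> assms, of k] by (simp add: algebra_simps)
  also have "\<dots> = r ^ k + real k * s ^ k"
    by (cases k) auto
  finally have "ennreal (s ^ k + real k * s ^ (k - 1) * r) \<le> ennreal (r ^ k + real k * s ^ k)"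
    by (rule ennreal_leI)
  then show ?thesis
    using real assms by (simp add: ennreal_plus ennreal_mult ennreal_power)
next
  case top
  then show ?thesis
    by (cases k) (auto simp: ennreal_top_mult)
qed

lemma (in prob_space) power_le_nn_integral_power:
  assumes f: "f \<in> borel_measurable M" and "0 \<le> s" and s_le: "ennreal s \<le> (\<integral>\<^sup>+x. f x \<partial>M)"
  shows "ennreal (s ^ k) \<le> (\<integral>\<^sup>+x. f x ^ k \<partial>M)"
proof (cases "s = 0")
  case True
  then show ?thesis
    by (cases k) (simp_all add: emeasure_space_1)
next
  case False
  with \<open>0 \<le> s\<close> have "0 < s" by simp
  let ?c = "ennreal (real k * s ^ (k - 1))"
  have "ennreal (s ^ k) + ennreal (real k * s ^ k) = ennreal (s ^ k) + ?c * ennreal s"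
    using \<open>0 < s\<close> by (cases k) (simp_all add: ennreal_mult [symmetric] mult_ac)
  also have "\<dots> \<le> ennreal (s ^ k) + ?c * (\<integral>\<^sup>+x. f x \<partial>M)"
    using s_le by (intro add_left_mono mult_left_mono) simp_all
  also have "\<dots> = (\<integral>\<^sup>+x. ennreal (s ^ k) + ?c * f x \<partial>M)"
    using f by (simp add: nn_integral_add nn_integral_cmult emeasure_space_1)
  also have "\<dots> \<le> (\<integral>\<^sup>+x. f x ^ k + ennreal (real k * s ^ k) \<partial>M)"
    using ennreal_power_tangent_le [OF \<open>0 < s\<close>] by (intro nn_integral_mono) simp
  also have "\<dots> = (\<integral>\<^sup>+x. f x ^ k \<partial>M) + ennreal (real k * s ^ k)"
    using f by (simp add: nn_integral_add emeasure_space_1)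
  finally show ?thesis
    by (simp add: add.commute ennreal_add_left_cancel_le)
qed

lemma exp_le_power_ratio:
  fixes \<alpha> :: real
  assumes "0 < \<alpha>" "1 \<le> k"
  shows "exp (- 1 / \<alpha>) \<le> (\<alpha> * k / (1 + \<alpha> * k)) ^ k"
proof -
  have "0 < \<alpha> * k"
    using assms by simp
  have "(1 + 1 / (\<alpha> * k)) ^ k \<le> exp (1 / (\<alpha> * k)) ^ k"
    using \<open>0 < \<alpha> * k\<close> by (intro power_mono exp_ge_add_one_self) simp
  also have "\<dots> = exp (1 / \<alpha>)"
    using assms by (simp add: exp_of_nat_mult [symmetric])
  finally have "1 / exp (1 / \<alpha>) \<le> 1 / (1 + 1 / (\<alpha> * k)) ^ k"
    using \<open>0 < \<alpha> * k\<close> by (intro divide_left_mono) (auto intro!: mult_pos_pos zero_less_power add_pos_pos)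
  also have "1 + 1 / (\<alpha> * k) = (1 + \<alpha> * k) / (\<alpha> * k)"
    using assms by (simp add: field_simps)
  finally show ?thesis
    by (simp add: exp_minus power_one_over [symmetric] inverse_eq_divide)
qed

lemma inverse_affine_powr_ge:
  fixes C \<alpha> :: real
  assumes "0 < C" "0 < \<alpha>" "1 \<le> k"
  shows "(1 / (C * (1 + \<alpha>))) powr (1 / \<alpha>) * real k powr (- 1 / \<alpha>)
    \<le> (1 / (C * (1 + \<alpha> * real k))) powr (1 / \<alpha>)"
proof -
  have "0 < real k"
    using assms by simp
  have "(1 / (C * (1 + \<alpha>))) powr (1 / \<alpha>) * real k powr (- 1 / \<alpha>)
      = (1 / (C * (1 + \<alpha>) * real k)) powr (1 / \<alpha>)"
    using assms \<open>0 < real k\<close> by (simp add: powr_minus_divide powr_divide powr_mult)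
  also have "\<dots> \<le> (1 / (C * (1 + \<alpha> * real k))) powr (1 / \<alpha>)"
    using assms \<open>0 < real k\<close>
    by (intro powr_mono2 divide_left_mono) (auto simp: algebra_simps intro: add_pos_nonneg)
  finally show ?thesis .
qed

lemma prod_indicator_eq_if:
  "finite I \<Longrightarrow>
    (\<Prod>i\<in>I. indicator A (f i)) = (if \<forall>i\<in>I. f i \<in> A then 1 else (0::'a::comm_semiring_1))"
  by (induction I rule: finite_induct) auto

lemma UNIV_in_sets_pair_borel [measurable]: "UNIV \<in> sets (borel \<Otimes>\<^sub>M borel)"
  using sets.top [of "borel \<Otimes>\<^sub>M borel"] by (simp add: space_pair_measure)

definition cond_prob ::
    "('m::euclidean_space \<Rightarrow> 'd::euclidean_space \<Rightarrow> real) \<Rightarrow> ('d \<times> 'm) set \<Rightarrow> 'd \<Rightarrow> ennreal"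
  where "cond_prob fYX G x = (\<integral>\<^sup>+y. ennreal (fYX y x) * indicator G (x, y) \<partial>lborel)"

locale cond_iid_observations = prob_space M
  for M :: "'a measure"
    and X :: "'a \<Rightarrow> 'd::euclidean_space"
    and Y :: "nat \<Rightarrow> 'a \<Rightarrow> 'm::euclidean_space"
    and fX :: "'d \<Rightarrow> real"
    and fYX :: "'m \<Rightarrow> 'd \<Rightarrow> real" +
  assumes fX_borel: "fX \<in> borel_measurable borel" and fX_nonneg: "\<And>x. fX x \<ge> 0"
    and fYX_borel: "(\<lambda>(y, x). fYX y x) \<in> borel_measurable borel" and fYX_nonneg: "\<And>y x. fYX y x \<ge> 0"
    and fYX_normalized: "\<And>x. (\<integral>\<^sup>+ y. ennreal (fYX y x) \<partial>lborel) = 1"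
    and joint_distributed: "\<And>k. distributed M (lborel \<Otimes>\<^sub>M PiM {..<k} (\<lambda>_. lborel))
                   (\<lambda>\<omega>. (X \<omega>, \<lambda>i\<in>{..<k}. Y i \<omega>))
                   (\<lambda>(x, ys). ennreal (fX x * (\<Prod>i<k. fYX (ys i) x)))"
begin

lemma fYX_measurable [measurable]: "(\<lambda>(y, x). fYX y x) \<in> borel_measurable (borel \<Otimes>\<^sub>M borel)"
  using fYX_borel by (simp add: borel_prod)

lemma X_measurable [measurable]: "X \<in> borel_measurable M"
  using measurable_compose [OF distributed_measurable [OF joint_distributed [of 0]] measurable_fst]
  by simp

lemma Y_measurable [measurable]: "Y i \<in> borel_measurable M"
  using measurable_compose [OF distributed_measurable [OF joint_distributed [of "Suc i"]]
      measurable_compose [OF measurable_snd measurable_component_singleton [of i]]]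
  by simp

lemma cond_prob_measurable [measurable]:
  assumes [measurable]: "G \<in> sets (borel \<Otimes>\<^sub>M borel)"
  shows "cond_prob fYX G \<in> borel_measurable borel"
  unfolding cond_prob_def by measurable

lemma emeasure_all_in:
  assumes [measurable]: "G \<in> sets (borel \<Otimes>\<^sub>M borel)"
  shows "emeasure M {\<omega> \<in> space M. \<forall>i<k. (X \<omega>, Y i \<omega>) \<in> G}
    = (\<integral>\<^sup>+x. ennreal (fX x) * cond_prob fYX G x ^ k \<partial>lborel)"
proof -
  let ?P = "PiM {..<k} (\<lambda>_. lborel :: 'm measure)"
  let ?Z = "\<lambda>\<omega>. (X \<omega>, \<lambda>i\<in>{..<k}. Y i \<omega>)"
  let ?F = "\<lambda>(x, ys). ennreal (fX x * (\<Prod>i<k. fYX (ys i) x))"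
  interpret product_sigma_finite "\<lambda>_. lborel :: 'm measure"
    by (auto simp: product_sigma_finite_def intro: sigma_finite_lborel)
  interpret P: sigma_finite_measure ?P
    by (rule sigma_finite) simp
  define T where "T = {p \<in> space (lborel \<Otimes>\<^sub>M ?P). \<forall>i<k. (fst p, snd p i) \<in> G}"
  have [measurable]: "T \<in> sets (lborel \<Otimes>\<^sub>M ?P)"
    unfolding T_def by measurable
  have [measurable]: "?F \<in> borel_measurable (lborel \<Otimes>\<^sub>M ?P)"
    using joint_distributed [of k] by (rule distributed_borel_measurable)
  have S_eq: "{\<omega> \<in> space M. \<forall>i<k. (X \<omega>, Y i \<omega>) \<in> G} = ?Z -` T \<inter> space M"
    using measurable_space [OF distributed_measurable [OF joint_distributed [of k]]]
    by (auto simp: T_def)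
  have "emeasure M {\<omega> \<in> space M. \<forall>i<k. (X \<omega>, Y i \<omega>) \<in> G}
      = (\<integral>\<^sup>+p. ?F p * indicator T p \<partial>(lborel \<Otimes>\<^sub>M ?P))"
    unfolding S_eq by (rule distributed_emeasure [OF joint_distributed]) measurable
  also have "\<dots> = (\<integral>\<^sup>+x. \<integral>\<^sup>+ys. ?F (x, ys) * indicator T (x, ys) \<partial>?P \<partial>lborel)"
    by (rule P.nn_integral_fst [symmetric]) measurable
  also have "\<dots> = (\<integral>\<^sup>+x. ennreal (fX x) *
      (\<integral>\<^sup>+ys. (\<Prod>i<k. ennreal (fYX (ys i) x) * indicator G (x, ys i)) \<partial>?P) \<partial>lborel)"
  proof (rule nn_integral_cong)
    fix x :: 'd
    have "(\<integral>\<^sup>+ys. ?F (x, ys) * indicator T (x, ys) \<partial>?P)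
        = (\<integral>\<^sup>+ys. ennreal (fX x) * (\<Prod>i<k. ennreal (fYX (ys i) x) * indicator G (x, ys i)) \<partial>?P)"
      by (intro nn_integral_cong)
        (auto simp: T_def space_pair_measure prod.distrib prod_indicator_eq_if ennreal_mult
          prod_ennreal fX_nonneg fYX_nonneg prod_nonneg indicator_eq_0_iff)
    also have "\<dots> = ennreal (fX x) *
        (\<integral>\<^sup>+ys. (\<Prod>i<k. ennreal (fYX (ys i) x) * indicator G (x, ys i)) \<partial>?P)"
      by (rule nn_integral_cmult) measurable
    finally show "(\<integral>\<^sup>+ys. ?F (x, ys) * indicator T (x, ys) \<partial>?P) = ennreal (fX x) *
        (\<integral>\<^sup>+ys. (\<Prod>i<k. ennreal (fYX (ys i) x) * indicator G (x, ys i)) \<partial>?P)" .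
  qed
  also have "\<dots> = (\<integral>\<^sup>+x. ennreal (fX x) * cond_prob fYX G x ^ k \<partial>lborel)"
    by (subst product_nn_integral_prod) (simp_all add: cond_prob_def)
  finally show ?thesis .
qed

lemma emeasure_pair_law:
  assumes [measurable]: "G \<in> sets (borel \<Otimes>\<^sub>M borel)"
  shows "emeasure (pair_law fX fYX) G = (\<integral>\<^sup>+x. ennreal (fX x) * cond_prob fYX G x \<partial>lborel)"
proof -
  note fX_borel [measurable]
  let ?H = "\<lambda>(x, y). ennreal (fX x * fYX y x)"
  have "emeasure (pair_law fX fYX) G = (\<integral>\<^sup>+p. ?H p * indicator G p \<partial>(lborel \<Otimes>\<^sub>M lborel))"
    unfolding pair_law_def lborel_prod [symmetric] by (rule emeasure_density) measurable
  also have "\<dots> = (\<integral>\<^sup>+x. \<integral>\<^sup>+y. ?H (x, y) * indicator G (x, y) \<partial>lborel \<partial>lborel)"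
    by (rule lborel.nn_integral_fst [symmetric]) measurable
  also have "\<dots> = (\<integral>\<^sup>+x. ennreal (fX x) * cond_prob fYX G x \<partial>lborel)"
    unfolding cond_prob_def
    by (subst nn_integral_cmult [symmetric])
      (auto intro!: nn_integral_cong simp: ennreal_mult fX_nonneg fYX_nonneg mult.assoc)
  finally show ?thesis .
qed

lemma nn_integral_fX: "(\<integral>\<^sup>+x. ennreal (fX x) \<partial>lborel) = 1"
  using emeasure_all_in [of UNIV 0] by (simp add: emeasure_space_1)

lemma prob_space_pair_law: "prob_space (pair_law fX fYX)"
proof
  show "emeasure (pair_law fX fYX) (space (pair_law fX fYX)) = 1"
    using emeasure_pair_law [of UNIV]
    by (simp add: pair_law_def cond_prob_def fYX_normalized nn_integral_fX)
qed

lemma prob_space_density_fX: "prob_space (density lborel fX)"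
proof
  show "emeasure (density lborel fX) (space (density lborel fX)) = 1"
    using fX_borel by (simp add: emeasure_density nn_integral_fX)
qed

lemma emeasure_all_outside_ge:
  assumes L [measurable]: "L \<in> sets (borel \<Otimes>\<^sub>M borel)"
    and "0 \<le> s" and L_small: "measure (pair_law fX fYX) L \<le> 1 - s"
  shows "ennreal (s ^ k) \<le> emeasure M {\<omega> \<in> space M. \<forall>i<k. (X \<omega>, Y i \<omega>) \<notin> L}"
proof -
  interpret Q: prob_space "density lborel fX"
    by (rule prob_space_density_fX)
  interpret P: prob_space "pair_law fX fYX"
    by (rule prob_space_pair_law)
  have compl_L [measurable]: "- L \<in> sets (borel \<Otimes>\<^sub>M borel)"
    using sets.compl_sets [of L "borel \<Otimes>\<^sub>M borel"] by (simp add: Compl_eq_Diff_UNIV space_pair_measure)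
  have "s \<le> P.prob (- L)"
  proof -
    have "L \<in> P.events"
      using L by (simp only: borel_prod) (simp add: pair_law_def)
    then show ?thesis
      using P.prob_compl [of L] L_small by (simp add: pair_law_def Compl_eq_Diff_UNIV)
  qed
  then have "ennreal s \<le> emeasure (pair_law fX fYX) (- L)"
    by (simp add: P.emeasure_eq_measure)
  also have "\<dots> = (\<integral>\<^sup>+x. cond_prob fYX (- L) x \<partial>density lborel fX)"
    using fX_borel by (simp add: emeasure_pair_law nn_integral_density)
  finally have "ennreal (s ^ k) \<le> (\<integral>\<^sup>+x. cond_prob fYX (- L) x ^ k \<partial>density lborel fX)"
    using \<open>0 \<le> s\<close> by (intro Q.power_le_nn_integral_power) simp_all
  also have "\<dots> = emeasure M {\<omega> \<in> space M. \<forall>i<k. (X \<omega>, Y i \<omega>) \<in> - L}"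
    using fX_borel by (subst emeasure_all_in [OF compl_L]) (simp add: nn_integral_density)
  finally show ?thesis
    by simp
qed

lemma nn_integral_min_dist_ge:
  fixes g :: "'m \<Rightarrow> 'd"
  assumes [measurable]: "g \<in> borel_measurable borel"
    and "0 \<le> a" "0 \<le> s" "1 \<le> k"
    and small_ball: "measure (pair_law fX fYX) {(x, y). (norm (x - g y))\<^sup>2 \<le> a} \<le> 1 - s"
  shows "ennreal (a * s ^ k)
    \<le> (\<integral>\<^sup>+\<omega>. ennreal (Min ((\<lambda>i. (norm (X \<omega> - g (Y i \<omega>)))\<^sup>2) ` {..<k})) \<partial>M)"
proof -
  define L where "L = {(x, y). (norm (x - g y))\<^sup>2 \<le> a}"
  have L [measurable]: "L \<in> sets (borel \<Otimes>\<^sub>M borel)"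
  proof -
    have "L = {p \<in> space (borel \<Otimes>\<^sub>M borel). (norm (fst p - g (snd p)))\<^sup>2 \<le> a}"
      by (auto simp: L_def space_pair_measure)
    also have "\<dots> \<in> sets (borel \<Otimes>\<^sub>M borel)"
      by measurable
    finally show ?thesis .
  qed
  define S where "S = {\<omega> \<in> space M. \<forall>i<k. (X \<omega>, Y i \<omega>) \<notin> L}"
  have [measurable]: "S \<in> sets M"
    unfolding S_def by measurable
  have "ennreal (a * s ^ k) = ennreal a * ennreal (s ^ k)"
    using \<open>0 \<le> a\<close> \<open>0 \<le> s\<close> by (simp add: ennreal_mult)
  also have "\<dots> \<le> ennreal a * emeasure M S"
    using emeasure_all_outside_ge [OF L \<open>0 \<le> s\<close> small_ball [folded L_def]]
    unfolding S_def by (rule mult_left_mono) simp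
  also have "\<dots> = (\<integral>\<^sup>+\<omega>. ennreal a * indicator S \<omega> \<partial>M)"
    by (rule nn_integral_cmult_indicator [symmetric]) measurable
  also have "\<dots> \<le> (\<integral>\<^sup>+\<omega>. ennreal (Min ((\<lambda>i. (norm (X \<omega> - g (Y i \<omega>)))\<^sup>2) ` {..<k})) \<partial>M)"
  proof (rule nn_integral_mono)
    fix \<omega>
    show "ennreal a * indicator S \<omega> \<le> ennreal (Min ((\<lambda>i. (norm (X \<omega> - g (Y i \<omega>)))\<^sup>2) ` {..<k}))"
    proof (cases "\<omega> \<in> S")
      case True
      then have "a < Min ((\<lambda>i. (norm (X \<omega> - g (Y i \<omega>)))\<^sup>2) ` {..<k})"
        using \<open>1 \<le> k\<close> by (subst Min_gr_iff) (auto simp: S_def L_def lessThan_empty_iff)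
      then show ?thesis
        using True by (simp add: ennreal_leI)
    qed simp
  qed
  finally show ?thesis .
qed

lemma nn_integral_min_dist_ge_exp:
  fixes g :: "'m \<Rightarrow> 'd"
  assumes g: "g \<in> borel_measurable borel" and "0 < C" "0 < \<alpha>" "1 \<le> k"
  defines "r \<equiv> (1 / (C * (1 + \<alpha> * real k))) powr (1 / \<alpha>)"
  assumes small_ball: "measure (pair_law fX fYX) {(x, y). (norm (x - g y))\<^sup>2 \<le> r} \<le> C * r powr \<alpha>"
  shows "ennreal (exp (- 1 / \<alpha>) * r)
    \<le> (\<integral>\<^sup>+\<omega>. ennreal (Min ((\<lambda>i. (norm (X \<omega> - g (Y i \<omega>)))\<^sup>2) ` {..<k})) \<partial>M)"
proof -
  define s where "s = \<alpha> * k / (1 + \<alpha> * k)"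
  have "0 < 1 + \<alpha> * k"
    using \<open>0 < \<alpha>\<close> by (simp add: add_pos_nonneg)
  then have "0 < r"
    using \<open>0 < C\<close> by (simp add: r_def)
  have "C * r powr \<alpha> = 1 / (1 + \<alpha> * k)"
    using \<open>0 < C\<close> \<open>0 < \<alpha>\<close> \<open>0 < 1 + \<alpha> * k\<close> by (simp add: r_def powr_powr)
  also have "\<dots> = 1 - s"
    using \<open>0 < 1 + \<alpha> * k\<close> by (simp add: s_def field_simps)
  finally have "ennreal (r * s ^ k)
      \<le> (\<integral>\<^sup>+\<omega>. ennreal (Min ((\<lambda>i. (norm (X \<omega> - g (Y i \<omega>)))\<^sup>2) ` {..<k})) \<partial>M)"
    using small_ball \<open>0 < r\<close> \<open>0 < \<alpha>\<close> \<open>1 \<le> k\<close>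
    by (intro nn_integral_min_dist_ge [OF g]) (simp_all add: s_def)
  moreover have "exp (- 1 / \<alpha>) * r \<le> r * s ^ k"
    using exp_le_power_ratio [OF \<open>0 < \<alpha>\<close> \<open>1 \<le> k\<close>] \<open>0 < r\<close> by (simp add: s_def mult.commute)
  ultimately show ?thesis
    using ennreal_leI order_trans by blast
qed

end

theorem theorem2:
  fixes M :: "'a measure"
    and X :: "'a \<Rightarrow> 'd::euclidean_space"
    and Y :: "nat \<Rightarrow> 'a \<Rightarrow> 'm::euclidean_space"
    and fX :: "'d \<Rightarrow> real"
    and fYX :: "'m \<Rightarrow> 'd \<Rightarrow> real"
    and g :: "'m \<Rightarrow> 'd"
    and C \<alpha> a0 :: real
  assumes "prob_space M"
    and "integrable M X"
    and "fX \<in> borel_measurable borel" and "\<And>x. fX x \<ge> 0"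
    and "(\<lambda>(y, x). fYX y x) \<in> borel_measurable borel" and "\<And>y x. fYX y x \<ge> 0"
    and "\<And>x. (\<integral>\<^sup>+ y. ennreal (fYX y x) \<partial>lborel) = 1"
    and joint: "\<And>k. distributed M (lborel \<Otimes>\<^sub>M PiM {..<k} (\<lambda>_. lborel))
                   (\<lambda>\<omega>. (X \<omega>, \<lambda>i\<in>{..<k}. Y i \<omega>))
                   (\<lambda>(x, ys). ennreal (fX x * (\<Prod>i<k. fYX (ys i) x)))"
    and "is_cond_exp_version (pair_law fX fYX) g"
    and "C > 0" and "\<alpha> > 0" and "a0 > 0"
    and small_ball: "\<And>a. 0 \<le> a \<Longrightarrow> a \<le> a0 \<Longrightarrow>
           measure (pair_law fX fYX) {(x, y). (norm (x - g y))\<^sup>2 \<le> a} \<le> C * a powr \<alpha>"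
  defines "D2 \<equiv> (\<lambda>k. \<integral>\<^sup>+ \<omega>. ennreal (Min ((\<lambda>i. (norm (X \<omega> - g (Y i \<omega>)))\<^sup>2) ` {..<k})) \<partial>M)"
  shows "(\<forall>k\<ge>1. (1 / (C * (1 + \<alpha> * real k))) powr (1 / \<alpha>) \<le> a0 \<longrightarrow>
            ennreal (exp (- 1 / \<alpha>) * (1 / (C * (1 + \<alpha> * real k))) powr (1 / \<alpha>)) \<le> D2 k)
       \<and> (\<exists>c>0. \<forall>\<^sub>F k in sequentially. ennreal (c * real k powr (- 1 / \<alpha>)) \<le> D2 k)"
proof -
  interpret cond_iid_observations M X Y fX fYX
    by (intro cond_iid_observations.intro cond_iid_observations_axioms.intro) (fact assms)+
  have g: "g \<in> borel_measurable borel"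
    using \<open>is_cond_exp_version (pair_law fX fYX) g\<close> by (simp add: is_cond_exp_version_def)
  define r where "r k = (1 / (C * (1 + \<alpha> * real k))) powr (1 / \<alpha>)" for k :: nat
  have lower_bound: "ennreal (exp (- 1 / \<alpha>) * r k) \<le> D2 k" if "1 \<le> k" "r k \<le> a0" for k
    unfolding D2_def r_def
    using that small_ball \<open>C > 0\<close> \<open>\<alpha> > 0\<close>
    by (intro nn_integral_min_dist_ge_exp [OF g]) (simp_all add: r_def)
  have "\<exists>c>0. \<forall>\<^sub>F k in sequentially. ennreal (c * real k powr (- 1 / \<alpha>)) \<le> D2 k"
  proof (intro exI conjI)
    let ?c = "exp (- 1 / \<alpha>) * (1 / (C * (1 + \<alpha>))) powr (1 / \<alpha>)"
    show "?c > 0"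
      using \<open>C > 0\<close> \<open>\<alpha> > 0\<close> by simp
    have "\<forall>\<^sub>F k in sequentially. r k \<le> a0"
      using \<open>C > 0\<close> \<open>\<alpha> > 0\<close> \<open>a0 > 0\<close> unfolding r_def by real_asymp
    then show "\<forall>\<^sub>F k in sequentially. ennreal (?c * real k powr (- 1 / \<alpha>)) \<le> D2 k"
      using eventually_ge_at_top [of 1]
    proof eventually_elim
      case (elim k)
      have "?c * real k powr (- 1 / \<alpha>) \<le> exp (- 1 / \<alpha>) * r k"
        using inverse_affine_powr_ge [OF \<open>C > 0\<close> \<open>\<alpha> > 0\<close> \<open>1 \<le> k\<close>] by (simp add: r_def mult.assoc)
      then show ?case
        using lower_bound [OF elim(2,1)] ennreal_leI order_trans by blast
    qed
  qed
  then show ?thesis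
    using lower_bound unfolding r_def by blast
qed

end
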